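(* Let $f:\mathbb{R}^n\to\mathbb{R}\cup\{+\infty\}$ be closed and convex, let $X\in\mathbb{R}^{n\times m}$ have rank $r$ with compact SVD $X=U_r\Sigma_r V_r^\top$, let $\gamma>0$ and $\lambda>0$. Define $$p_{\rm pen}(\lambda)=\min_{w\in\mathbb{R}^m}\ f(Xw)+\tfrac{\gamma}{2}\|w\|_2^2+\lambda\|w\|_0,$$ $$p^{**}_{\rm pen}(\lambda)=\min_{v\in\mathbb{R}^m,\ u\in[0,1]^m}\ f(XD(u)v)+\tfrac{\gamma}{2}v^\top D(u)v+\lambda\mathbf 1^\top u .$$ Let $(v^*,u^* )$ be an optimal solution of the latter problem with optimal value $t^*$, let $z^*=\Sigma_rV_r^\top D(u^* )v^*$, let $\ell_i$ be the $i$-th column of $\Sigma_rV_r^\top$, and let $c\sim\mathcal N(0,I_m)$. Consider the linear program in $u\in\mathbb{R}^m$: $$\min\ c^\top u\quad\text{s.t.}\quad f(U_rz^* )+\sum_{i=1}^m\Big(u_i\tfrac{\gamma}{2}(v_i^* )^2+\lambda u_i\Big)=t^*,\quad \sum_{i=1}^m u_i\ell_i v_i^*=z^*,\quad u\in[0,1]^m.$$ Then, with probability one, from an optimal basic feasible solution $\bar u$ of this linear program one can construct a primal feasible point (namely, with $S=\{i:\bar u_i\notin\{0,1\}\}$, $\tilde u_i=1,\tilde v_i=\bar u_iv_i^*$ for $i\in S$, $\tilde u_i=\bar u_i,\tilde v_i=v_i^*$ for $i\notin S$, and $w=D(\tilde u)\tilde v$) whose objective value $\mathrm{OPT}=f(Xw)+\tfrac{\gamma}{2}\|w\|_2^2+\lambda\mathbf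 1^\top\tilde u$ satisfies $$p^{**}_{\rm pen}(\lambda)\le p_{\rm pen}(\lambda)\le \mathrm{OPT}\le p^{**}_{\rm pen}(\lambda)+\lambda(r+1).$$
   Context: $\|w\|_0$ denotes the number of nonzero entries of $w$; $D(u)=\mathrm{diag}(u_1,\dots,u_m)$; $\mathbf 1$ is the all-ones vector. A function is closed if it is lower semicontinuous. Note $p_{\rm pen}(\lambda)=\min_{v\in\mathbb{R}^m,u\in\{0,1\}^m} f(XD(u)v)+\tfrac{\gamma}{2}v^\top D(u)v+\lambda\mathbf 1^\top u$. *)

theory Defs
  imports "HOL-Analysis.Analysis" "HOL-Probability.Probability"
begin

text \<open>Closed (= lower semicontinuous) extended-real-valued function on a type.\<close>
definition closed_fun :: "('a::topological_space \<Rightarrow> ereal) \<Rightarrow> bool" where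
  "closed_fun f \<longleftrightarrow> (\<forall>a::ereal. open {x. a < f x})"

definition convex_fun :: "('a::real_vector \<Rightarrow> ereal) \<Rightarrow> bool" where
  "convex_fun f \<longleftrightarrow> convex {(x, t::real). f x \<le> ereal t}"

definition Dmat :: "real^'m \<Rightarrow> real^'m^'m" where
  "Dmat u = (\<chi> i j. if i = j then u $ i else 0)"

definition l0norm :: "real^'m \<Rightarrow> nat" where
  "l0norm w = card {i. w $ i \<noteq> 0}"

definition unit_box :: "(real^'m) set" where
  "unit_box = {u. \<forall>i. 0 \<le> u $ i \<and> u $ i \<le> 1}"

definition p_pen :: "(real^'n \<Rightarrow> ereal) \<Rightarrow> real^'m^'n \<Rightarrow> real \<Rightarrow> real \<Rightarrow> ereal" where
  "p_pen f X gam lam = (INF w. f (X *v w) + ereal (gam/2 * (norm w)^2) + ereal (lam * real (l0norm w)))"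

definition relax_obj :: "(real^'n \<Rightarrow> ereal) \<Rightarrow> real^'m^'n \<Rightarrow> real \<Rightarrow> real \<Rightarrow> real^'m \<Rightarrow> real^'m \<Rightarrow> ereal" where
  "relax_obj f X gam lam v u = f (X *v (Dmat u *v v)) + ereal (gam/2 * (v \<bullet> (Dmat u *v v)))
      + ereal (lam * (\<Sum>i\<in>UNIV. u $ i))"

definition p_pen_relax :: "(real^'n \<Rightarrow> ereal) \<Rightarrow> real^'m^'n \<Rightarrow> real \<Rightarrow> real \<Rightarrow> ereal" where
  "p_pen_relax f X gam lam = (INF p \<in> UNIV \<times> unit_box. relax_obj f X gam lam (fst p) (snd p))"

definition compact_svd :: "real^'m^'n \<Rightarrow> real^'r^'n \<Rightarrow> real^'r^'r \<Rightarrow> real^'r^'m \<Rightarrow> bool" where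
  "compact_svd X U S V \<longleftrightarrow> CARD('r) = rank X \<and> X = U ** S ** transpose V
     \<and> transpose U ** U = mat 1 \<and> transpose V ** V = mat 1
     \<and> (\<forall>i j. i \<noteq> j \<longrightarrow> S $ i $ j = 0) \<and> (\<forall>i. S $ i $ i > 0)"

text \<open>Feasible set of the LP (in u), given data: f(U z*), t*, v*, L = Sigma_r V_r^T, z*.\<close>
definition lp_feasible :: "ereal \<Rightarrow> ereal \<Rightarrow> real \<Rightarrow> real \<Rightarrow> real^'m \<Rightarrow> real^'m^'r \<Rightarrow> real^'r \<Rightarrow> real^'m \<Rightarrow> bool" where
  "lp_feasible fz t gam lam vs L z u \<longleftrightarrow>
     fz + ereal (\<Sum>i\<in>UNIV. u $ i * (gam/2) * (vs $ i)^2 + lam * u $ i) = t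
     \<and> (\<Sum>i\<in>UNIV. (u $ i * vs $ i) *\<^sub>R column i L) = z
     \<and> u \<in> unit_box"

text \<open>Basic feasible solution: feasible, and the gradients of the active constraints
  (both equality constraints and the tight bound constraints) span R^m.\<close>
definition lp_bfs :: "ereal \<Rightarrow> ereal \<Rightarrow> real \<Rightarrow> real \<Rightarrow> real^'m \<Rightarrow> real^'m^'r \<Rightarrow> real^'r \<Rightarrow> real^'m \<Rightarrow> bool" where
  "lp_bfs fz t gam lam vs L z u \<longleftrightarrow> lp_feasible fz t gam lam vs L z u \<and>
     span ({\<chi> i. (gam/2) * (vs $ i)^2 + lam}
           \<union> {(\<chi> i. L $ k $ i * vs $ i) | k. True}
           \<union> {axis i 1 | i. u $ i = 0 \<or> u $ i = 1}) = UNIV"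

definition lp_optimal_bfs :: "real^'m \<Rightarrow> ereal \<Rightarrow> ereal \<Rightarrow> real \<Rightarrow> real \<Rightarrow> real^'m \<Rightarrow> real^'m^'r \<Rightarrow> real^'r \<Rightarrow> real^'m \<Rightarrow> bool" where
  "lp_optimal_bfs c fz t gam lam vs L z u \<longleftrightarrow> lp_bfs fz t gam lam vs L z u \<and>
     (\<forall>u'. lp_feasible fz t gam lam vs L z u' \<longrightarrow> c \<bullet> u \<le> c \<bullet> u')"

definition std_gaussian :: "(real^'m) measure" where
  "std_gaussian = density lborel
     (\<lambda>c. ennreal ((2*pi) powr (- real CARD('m) / 2) * exp (- ((norm c) ^ 2) / 2)))"

end

theory Submission
  imports Defs
begin

text \<open>Every optimal basic feasible solution \<open>u\<close> of the linear program is again optimal for the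
  relaxation, since the program only admits points with the same value of \<open>X D(u) v\<^sup>*\<close> and the
  same objective \<open>t\<^sup>*\<close>. Rounding its fractional coordinates up to \<open>1\<close>, while scaling the
  corresponding \<open>v\<^sub>i\<close> by \<open>u\<^sub>i\<close>, leaves \<open>w = D(u) v\<^sup>*\<close> unchanged, does not increase the quadratic
  term (because \<open>u\<^sub>i\<^sup>2 \<le> u\<^sub>i\<close>) and costs at most \<open>\<lambda>\<close> per fractional coordinate. At a basic
  solution the \<open>m\<close> active constraint gradients span \<open>\<real>\<^sup>m\<close>; apart from the \<open>r + 1\<close> equality
  constraints these are unit vectors of coordinates at a bound \<open>0\<close> or \<open>1\<close>, so at most \<open>r + 1\<close> coordinates are
  fractional.\<close>

lemma Dmat_mult_vec_nth [simp]: "(Dmat u *v v) $ i = u $ i * v $ i"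
proof -
  have "(Dmat u *v v) $ i = (\<Sum>j\<in>UNIV. if i = j then u $ i * v $ j else 0)"
    unfolding Dmat_def matrix_vector_mult_def by (simp only: vec_lambda_beta, rule sum.cong) auto
  then show ?thesis by simp
qed

lemma inner_Dmat: "v \<bullet> (Dmat u *v v) = (\<Sum>i\<in>UNIV. u $ i * (v $ i)\<^sup>2)"
  by (simp add: inner_vec_def power2_eq_square algebra_simps)

lemma norm_Dmat_le_inner_Dmat:
  assumes "u \<in> unit_box"
  shows "(norm (Dmat u *v v))\<^sup>2 \<le> v \<bullet> (Dmat u *v v)"
proof -
  have "(u $ i * v $ i)\<^sup>2 \<le> u $ i * (v $ i)\<^sup>2" for i
  proof -
    have "u $ i * u $ i \<le> u $ i"
      using assms by (simp add: unit_box_def mult_left_le)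
    then have "(u $ i * u $ i) * (v $ i)\<^sup>2 \<le> u $ i * (v $ i)\<^sup>2"
      by (rule mult_right_mono) simp
    then show ?thesis by (simp add: power2_eq_square algebra_simps)
  qed
  then show ?thesis
    by (simp add: norm_vec_def L2_set_def sum_nonneg inner_Dmat sum_mono)
qed

lemma p_pen_relax_le_p_pen:
  fixes X :: "real^'m^'n"
  shows "p_pen_relax f X gam lam \<le> p_pen f X gam lam"
  unfolding p_pen_def p_pen_relax_def
proof (rule INF_greatest)
  fix w :: "real^'m"
  define u :: "real^'m" where "u = (\<chi> i. if w $ i = 0 then 0 else 1)"
  have "u \<in> unit_box" unfolding unit_box_def u_def by auto
  have Dw: "Dmat u *v w = w" by (simp add: vec_eq_iff u_def)
  have "(\<Sum>i\<in>UNIV. u $ i) = real (l0norm w)"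
    unfolding u_def l0norm_def by (simp add: sum.If_cases Collect_neg_eq)
  then have "relax_obj f X gam lam w u
      = f (X *v w) + ereal (gam/2 * (norm w)\<^sup>2) + ereal (lam * real (l0norm w))"
    unfolding relax_obj_def Dw by (simp add: power2_norm_eq_inner)
  with \<open>u \<in> unit_box\<close> show "(INF p \<in> UNIV \<times> unit_box. relax_obj f X gam lam (fst p) (snd p))
      \<le> f (X *v w) + ereal (gam/2 * (norm w)\<^sup>2) + ereal (lam * real (l0norm w))"
    by (metis (no_types, lifting) INF_lower SigmaI UNIV_I fst_conv snd_conv)
qed

lemma p_pen_le_binary:
  assumes binary: "\<forall>i. u $ i = 0 \<or> u $ i = 1" and "lam \<ge> 0"
  shows "p_pen f X gam lam
    \<le> f (X *v (Dmat u *v v)) + ereal (gam/2 * (norm (Dmat u *v v))\<^sup>2) + ereal (lam * (\<Sum>i\<in>UNIV. u $ i))"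
proof -
  define w where "w = Dmat u *v v"
  have "{i. w $ i \<noteq> 0} \<subseteq> {i. u $ i = 1}"
    using binary by (auto simp: w_def)
  then have "l0norm w \<le> card {i. u $ i = 1}"
    unfolding l0norm_def by (simp add: card_mono)
  also have "real (card {i. u $ i = 1}) = (\<Sum>i\<in>UNIV. u $ i)"
  proof -
    have "(\<Sum>i\<in>UNIV. u $ i) = (\<Sum>i\<in>UNIV. if u $ i = 1 then 1 else 0)"
      by (rule sum.cong) (use binary in auto)
    then show ?thesis by (simp add: sum.If_cases)
  qed
  finally have "lam * real (l0norm w) \<le> lam * (\<Sum>i\<in>UNIV. u $ i)"
    using \<open>lam \<ge> 0\<close> by (simp add: mult_left_mono)
  have "p_pen f X gam lam \<le> f (X *v w) + ereal (gam/2 * (norm w)\<^sup>2) + ereal (lam * real (l0norm w))"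
    unfolding p_pen_def by (rule INF_lower[OF UNIV_I])
  also have "\<dots> \<le> f (X *v w) + ereal (gam/2 * (norm w)\<^sup>2) + ereal (lam * (\<Sum>i\<in>UNIV. u $ i))"
    using \<open>lam * real (l0norm w) \<le> _\<close> by (intro add_left_mono) simp
  finally show ?thesis unfolding w_def .
qed

definition fractional_coords :: "real^'m \<Rightarrow> 'm set" where
  "fractional_coords u = {i. u $ i \<noteq> 0 \<and> u $ i \<noteq> 1}"

definition rounded_indicator :: "real^'m \<Rightarrow> real^'m" where
  "rounded_indicator u = (\<chi> i. if i \<in> fractional_coords u then 1 else u $ i)"

definition rescaled_weights :: "real^'m \<Rightarrow> real^'m \<Rightarrow> real^'m" where
  "rescaled_weights u v = (\<chi> i. if i \<in> fractional_coords u then u $ i * v $ i else v $ i)"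

lemma rounded_indicator_binary: "rounded_indicator u $ i = 0 \<or> rounded_indicator u $ i = 1"
  by (simp add: rounded_indicator_def fractional_coords_def)

lemma Dmat_rounded_indicator_rescaled_weights:
  "Dmat (rounded_indicator u) *v rescaled_weights u v = Dmat u *v v"
  by (simp add: vec_eq_iff rounded_indicator_def rescaled_weights_def)

lemma sum_rounded_indicator_le:
  assumes "u \<in> unit_box"
  shows "(\<Sum>i\<in>UNIV. rounded_indicator u $ i) \<le> (\<Sum>i\<in>UNIV. u $ i) + real (card (fractional_coords u))"
proof -
  have "real (card (fractional_coords u)) = (\<Sum>i\<in>UNIV. if i \<in> fractional_coords u then 1 else 0)"
    by (simp add: sum.If_cases)
  then show ?thesis
    using assms unfolding unit_box_def
    by (simp add: rounded_indicator_def sum.distrib[symmetric] sum_mono)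
qed

lemma rounding_obj_le:
  fixes u v :: "real^'m"
  assumes "u \<in> unit_box" and "gam \<ge> 0" and "lam \<ge> 0"
  defines "w \<equiv> Dmat (rounded_indicator u) *v rescaled_weights u v"
  shows "f (X *v w) + ereal (gam/2 * (norm w)\<^sup>2) + ereal (lam * (\<Sum>i\<in>UNIV. rounded_indicator u $ i))
    \<le> relax_obj f X gam lam v u + ereal (lam * real (card (fractional_coords u)))"
proof -
  have w: "w = Dmat u *v v"
    unfolding w_def by (rule Dmat_rounded_indicator_rescaled_weights)
  have "gam/2 * (norm w)\<^sup>2 \<le> gam/2 * (v \<bullet> (Dmat u *v v))"
    unfolding w using assms(1,2) by (intro mult_left_mono norm_Dmat_le_inner_Dmat) auto
  moreover have "lam * (\<Sum>i\<in>UNIV. rounded_indicator u $ i)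
      \<le> lam * (\<Sum>i\<in>UNIV. u $ i) + lam * real (card (fractional_coords u))"
    using mult_left_mono[OF sum_rounded_indicator_le[OF assms(1)] assms(3)]
    by (simp add: distrib_left)
  ultimately have "f (X *v w) + ereal (gam/2 * (norm w)\<^sup>2) + ereal (lam * (\<Sum>i\<in>UNIV. rounded_indicator u $ i))
      \<le> f (X *v w) + ereal (gam/2 * (v \<bullet> (Dmat u *v v)))
         + (ereal (lam * (\<Sum>i\<in>UNIV. u $ i)) + ereal (lam * real (card (fractional_coords u))))"
    by (intro add_mono) auto
  then show ?thesis
    unfolding relax_obj_def w by (simp add: add.assoc)
qed

lemma lp_feasible_relax_obj:
  assumes "X = U ** L" and "lp_feasible (f (U *v z)) t gam lam vs L z u"
  shows "relax_obj f X gam lam vs u = t"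
proof -
  have "L *v (Dmat u *v vs) = (\<Sum>i\<in>UNIV. (u $ i * vs $ i) *\<^sub>R column i L)"
    by (simp only: matrix_mult_sum[of L] scalar_mult_eq_scaleR Dmat_mult_vec_nth)
  then have "X *v (Dmat u *v vs) = U *v z"
    using assms by (simp add: lp_feasible_def matrix_vector_mul_assoc[symmetric])
  moreover have "(\<Sum>i\<in>UNIV. u $ i * (gam/2) * (vs $ i)\<^sup>2 + lam * u $ i)
      = gam/2 * (vs \<bullet> (Dmat u *v vs)) + lam * (\<Sum>i\<in>UNIV. u $ i)"
    by (simp add: inner_Dmat sum.distrib sum_distrib_left algebra_simps)
  ultimately show ?thesis
    using assms(2) unfolding relax_obj_def lp_feasible_def by (simp add: add.assoc)
qed

lemma card_le_card_of_span_axis: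
  fixes A :: "(real^'m) set"
  assumes "finite A" and "span (A \<union> (\<lambda>i. axis i 1) ` (- S)) = UNIV"
  shows "card S \<le> card A"
proof -
  have "CARD('m) = dim (UNIV :: (real^'m) set)" by (simp add: dim_UNIV)
  also have "\<dots> \<le> card (A \<union> (\<lambda>i. axis i 1) ` (- S))"
    using assms by (intro dim_le_card) auto
  also have "\<dots> \<le> card A + card ((\<lambda>i. axis i (1::real)) ` (- S))" by (rule card_Un_le)
  also have "\<dots> \<le> card A + card (- S)" by (simp add: card_image_le)
  also have "card (- S) = CARD('m) - card S" by (simp add: Compl_eq_Diff_UNIV card_Diff_subset)
  finally have "CARD('m) \<le> card A + (CARD('m) - card S)" .
  moreover have "card S \<le> CARD('m)" by (simp add: card_mono)
  ultimately show ?thesis by linarith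
qed

lemma card_fractional_coords_bfs:
  fixes L :: "real^'m^'r"
  assumes "lp_bfs fz t gam lam vs L z u"
  shows "card (fractional_coords u) \<le> CARD('r) + 1"
proof -
  define A where "A = insert (\<chi> i. (gam/2) * (vs $ i)\<^sup>2 + lam) (range (\<lambda>k. \<chi> i. L $ k $ i * vs $ i))"
  have "span (A \<union> (\<lambda>i. axis i 1) ` (- fractional_coords u)) = UNIV"
  proof -
    have "A \<union> (\<lambda>i. axis i 1) ` (- fractional_coords u)
        = {\<chi> i. (gam/2) * (vs $ i)\<^sup>2 + lam} \<union> {(\<chi> i. L $ k $ i * vs $ i) | k. True}
          \<union> {axis i 1 | i. u $ i = 0 \<or> u $ i = 1}"
      unfolding A_def fractional_coords_def by auto
    with assms show ?thesis unfolding lp_bfs_def by simp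
  qed
  then have "card (fractional_coords u) \<le> card A"
    by (rule card_le_card_of_span_axis[rotated]) (simp add: A_def)
  also have "\<dots> \<le> Suc (card (range (\<lambda>k. \<chi> i. L $ k $ i * vs $ i)))"
    unfolding A_def by (rule card_insert_le_m1) auto
  also have "\<dots> \<le> CARD('r) + 1" by (simp add: card_image_le)
  finally show ?thesis .
qed

theorem corollary3p1:
  fixes f :: "real^'n \<Rightarrow> ereal"
    and X :: "real^'m^'n"
    and U :: "real^'r^'n" and S :: "real^'r^'r" and V :: "real^'r^'m"
    and gam lam :: real
    and vs us :: "real^'m" and ts :: ereal
  assumes f_range: "\<forall>x. f x \<noteq> -\<infinity>"
    and f_closed: "closed_fun f"
    and f_convex: "convex_fun f"
    and svd: "compact_svd X U S V"
    and gamma_pos: "gam > 0" and lambda_pos: "lam > 0"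
    and us_box: "us \<in> unit_box"
    and ts_def: "ts = relax_obj f X gam lam vs us"
    and opt: "\<forall>v. \<forall>u\<in>unit_box. ts \<le> relax_obj f X gam lam v u"
  shows "AE c in std_gaussian.
    (let L = S ** transpose V; zs = L *v (Dmat us *v vs) in
     \<forall>ub. lp_optimal_bfs c (f (U *v zs)) ts gam lam vs L zs ub \<longrightarrow>
       (let Sf = {i. ub $ i \<noteq> 0 \<and> ub $ i \<noteq> 1};
            ut = (\<chi> i. if i \<in> Sf then 1 else ub $ i);
            vt = (\<chi> i. if i \<in> Sf then ub $ i * vs $ i else vs $ i);
            w = Dmat ut *v vt;
            OPT = f (X *v w) + ereal (gam/2 * (norm w)^2) + ereal (lam * (\<Sum>i\<in>UNIV. ut $ i))
        in p_pen_relax f X gam lam \<le> p_pen f X gam lam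
           \<and> p_pen f X gam lam \<le> OPT
           \<and> OPT \<le> p_pen_relax f X gam lam + ereal (lam * (real (rank X) + 1))))"
proof (rule AE_I2, unfold Let_def fractional_coords_def[symmetric]
    rounded_indicator_def[symmetric] rescaled_weights_def[symmetric], intro allI impI)
  fix c ub
  let ?w = "Dmat (rounded_indicator ub) *v rescaled_weights ub vs"
  let ?OPT = "f (X *v ?w) + ereal (gam/2 * (norm ?w)\<^sup>2)
    + ereal (lam * (\<Sum>i\<in>UNIV. rounded_indicator ub $ i))"
  assume lp: "lp_optimal_bfs c (f (U *v (S ** transpose V *v (Dmat us *v vs)))) ts gam lam vs
      (S ** transpose V) (S ** transpose V *v (Dmat us *v vs)) ub"
  have rank: "rank X = CARD('r)" and X: "X = U ** (S ** transpose V)"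
    using svd unfolding compact_svd_def by (auto simp: matrix_mul_assoc)
  have ts_le: "ts \<le> p_pen_relax f X gam lam"
    unfolding p_pen_relax_def using opt by (auto intro!: INF_greatest)
  from lp have "ub \<in> unit_box" and relax_ub: "relax_obj f X gam lam vs ub = ts"
    using lp_feasible_relax_obj[OF X]
    unfolding lp_optimal_bfs_def lp_bfs_def lp_feasible_def by auto
  have card_le: "real (card (fractional_coords ub)) \<le> real (rank X) + 1"
    using card_fractional_coords_bfs lp rank unfolding lp_optimal_bfs_def by fastforce
  have "?OPT \<le> relax_obj f X gam lam vs ub + ereal (lam * real (card (fractional_coords ub)))"
    using \<open>ub \<in> unit_box\<close> gamma_pos lambda_pos by (intro rounding_obj_le) auto
  also have "\<dots> \<le> ts + ereal (lam * (real (rank X) + 1))"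
    unfolding relax_ub using card_le lambda_pos by (intro add_left_mono) (simp add: mult_left_mono)
  also have "\<dots> \<le> p_pen_relax f X gam lam + ereal (lam * (real (rank X) + 1))"
    using ts_le by (rule add_right_mono)
  finally have "?OPT \<le> p_pen_relax f X gam lam + ereal (lam * (real (rank X) + 1))" .
  moreover have "p_pen f X gam lam \<le> ?OPT"
    using lambda_pos by (intro p_pen_le_binary) (auto simp: rounded_indicator_binary)
  ultimately show "p_pen_relax f X gam lam \<le> p_pen f X gam lam
    \<and> p_pen f X gam lam \<le> ?OPT
    \<and> ?OPT \<le> p_pen_relax f X gam lam + ereal (lam * (real (rank X) + 1))"
    using p_pen_relax_le_p_pen by blast
qed

end
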